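(* Let $k, s$ be constants, $S \subseteq \mathbb{F}$ finite, $m \leq s-1-k$ a natural number, $D = 10|S|(s-m)/m^{1/k}$, and let $P$ assign to every $\mathbf{a}\in S^k$ a tuple $P(\mathbf{a}) = (P_0(\mathbf{a}),\dots,P_{s-1}(\mathbf{a}))$ with $P_i(\mathbf{a}) \in \mathbb{F}[\mathbf{z}]$ homogeneous of degree $i$. Let $Q(\mathbf{x},\mathbf{y}) = \sum_{i=1}^m Q_i(\mathbf{x}) y_i \in \mathbb{F}(\mathbf{z})[\mathbf{x},\mathbf{y}]$ be a non-zero polynomial with each $Q_i$ of $\mathbf{x}$-degree at most $D$, such that $\Delta_{\mathbf{e}}(Q)(\mathbf{a}) = 0$ for every $\mathbf{a}\in S^k$ and every $\mathbf{e}\in\mathbb{Z}_{\geq 0}^k$ with $\|\mathbf{e}\|_1 \leq s-1-m$. If $f \in \mathbb{F}[\mathbf{x}]$ is a polynomial of degree at most $d$ such that the number of $\mathbf{a} \in S^k$ satisfying $P(\mathbf{a}) = \Delta(f)(\mathbf{a})$ is at least $T > (D+d)|S|^{k-1}/(s-m)$, then $Q(\mathbf{x}, \Delta_0(f), \Delta_1(f), \dots, \Delta_{m-1}(f)) = \sum_{i=1}^m Q_i(\mathbf{x})\Delta_{i-1}(f)$ is identically zero as a polynomial in $\mathbb{F}(\mathbf{z})[\mathbf{x}]$.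
   Context: $\mathbb{F}$ is a field of characteristic zero or larger than $d$. $\mathbf{x} = (x_1,\dots,x_k)$, $\mathbf{z}=(z_1,\dots,z_k)$, $\mathbf{y}=(y_1,\dots,y_m)$. Hasse derivatives with respect to $\mathbf{x}$: $\frac{\partial g}{\partial \mathbf{x}^{\mathbf{e}}}$ is the coefficient of $\mathbf{w}^{\mathbf{e}}$ in $g(\mathbf{x}+\mathbf{w})$. For $f\in\mathbb{F}[\mathbf{x}]$, $\Delta_i(f) := \sum_{\mathbf{e} : \|\mathbf{e}\|_1 = i} \mathbf{z}^{\mathbf{e}} \frac{\partial f}{\partial \mathbf{x}^{\mathbf{e}}} \in \mathbb{F}[\mathbf{x},\mathbf{z}]$ and $\Delta(f)(\mathbf{a}) = (\Delta_0(f)(\mathbf{a}),\dots,\Delta_{s-1}(f)(\mathbf{a})) \in \mathbb{F}[\mathbf{z}]^s$. For $\mathbf{e}' \leq \mathbf{e}$ coordinatewise, $\binom{\mathbf{e}}{\mathbf{e}'} = \prod_j\binom{e_j}{e'_j}$. For a tuple $P=(P_0,\dots,P_{s-1})$ of homogeneous $P_i\in\mathbb{F}[\mathbf{z}]$ of degree $i$, $\tau^{(i)}_{\mathbf{e}}(P) := \sum_{\|\mathbf{e}'\|_1 = i} \mathbf{z}^{\mathbf{e}'}\binom{\mathbf{e}+\mathbf{e}'}{\mathbf{e}}\operatorname{coeff}_{\mathbf{z}^{\mathbf{e}+\mathbf{e}'}}(P_{i+\|\mathbf{e}\|_1})$, and $\Delta_{\mathbf{e}}(Q)(\mathbf{a})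 := \sum_{i=1}^m\sum_{\mathbf{e}'\leq\mathbf{e}} \frac{\partial Q_i}{\partial\mathbf{x}^{\mathbf{e}'}}(\mathbf{a})\cdot\tau^{(i-1)}_{\mathbf{e}-\mathbf{e}'}(P(\mathbf{a}))$. *)

theory Defs
  imports "HOL-Library.Poly_Mapping" "HOL-Library.Cardinality" "HOL-Computational_Algebra.Fraction_Field" Complex_Main
begin

text \<open>Multivariate polynomials in the variables indexed by a finite type 'k
  (so there are k = CARD('k) variables): finitely supported maps from exponent
  vectors to coefficients.  The same index type is used for
  x = (x_1,...,x_k) and z = (z_1,...,z_k).\<close>

type_synonym ('k, 'a) mpoly = "('k \<Rightarrow>\<^sub>0 nat) \<Rightarrow>\<^sub>0 'a"

type_synonym ('k, 'a) ratfun = "('k, 'a) mpoly fract"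

definition mdeg :: "('k \<Rightarrow>\<^sub>0 nat) \<Rightarrow> nat" where
  "mdeg e = (\<Sum>j\<in>Poly_Mapping.keys e. Poly_Mapping.lookup e j)"

text \<open>Total degree of a polynomial (0 for the zero polynomial).\<close>
definition tdeg :: "('k, 'a::zero) mpoly \<Rightarrow> nat" where
  "tdeg p = Max (insert 0 (mdeg ` Poly_Mapping.keys p))"

definition expvecs :: "nat \<Rightarrow> ('k \<Rightarrow>\<^sub>0 nat) set" where
  "expvecs i = {e. mdeg e = i}"

definition mbinom :: "('k \<Rightarrow>\<^sub>0 nat) \<Rightarrow> ('k \<Rightarrow>\<^sub>0 nat) \<Rightarrow> nat" where
  "mbinom e e' = (\<Prod>j\<in>Poly_Mapping.keys e'. Poly_Mapping.lookup e j choose Poly_Mapping.lookup e' j)"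

definition mpeval :: "('k, 'b::comm_semiring_1) mpoly \<Rightarrow> ('k \<Rightarrow> 'b) \<Rightarrow> 'b" where
  "mpeval p a = (\<Sum>\<alpha>\<in>Poly_Mapping.keys p. Poly_Mapping.lookup p \<alpha> * (\<Prod>j\<in>Poly_Mapping.keys \<alpha>. a j ^ Poly_Mapping.lookup \<alpha> j))"

text \<open>Hasse derivative d g / d x^e: coefficient of w^e in g(x+w).  Expanding
  (x+w)^\<alpha> by the binomial theorem this is sum_\<alpha> c_\<alpha> binom(\<alpha>,e) x^(\<alpha>-e)
  (terms with e not below \<alpha> have binomial coefficient 0).\<close>
definition hasse :: "('k \<Rightarrow>\<^sub>0 nat) \<Rightarrow> ('k, 'b::comm_semiring_1) mpoly \<Rightarrow> ('k, 'b) mpoly" where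
  "hasse e p = (\<Sum>\<alpha>\<in>Poly_Mapping.keys p. Poly_Mapping.single (\<alpha> - e) (of_nat (mbinom \<alpha> e) * Poly_Mapping.lookup p \<alpha>))"

definition rconst :: "'a::idom \<Rightarrow> ('k::{linorder}, 'a) ratfun" where
  "rconst c = Fraction_Field.Fract (Poly_Mapping.single 0 c) 1"

definition rpoly :: "('k::{linorder}, 'a::idom) mpoly \<Rightarrow> ('k, 'a) ratfun" where
  "rpoly p = Fraction_Field.Fract p 1"

definition DeltaAt :: "('k::finite, 'a::field) mpoly \<Rightarrow> nat \<Rightarrow> ('k \<Rightarrow> 'a) \<Rightarrow> ('k, 'a) mpoly" where
  "DeltaAt f i a = (\<Sum>e\<in>expvecs i. Poly_Mapping.single e (mpeval (hasse e f) a))"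

definition DeltaPoly :: "('k::{finite,linorder}, 'a::field) mpoly \<Rightarrow> nat \<Rightarrow> ('k, ('k, 'a) ratfun) mpoly" where
  "DeltaPoly f i = (\<Sum>e\<in>expvecs i. Poly_Mapping.map (\<lambda>c. rpoly (Poly_Mapping.single e c)) (hasse e f))"

definition tau :: "nat \<Rightarrow> ('k::finite \<Rightarrow>\<^sub>0 nat) \<Rightarrow> (nat \<Rightarrow> ('k, 'a::field) mpoly) \<Rightarrow> ('k, 'a) mpoly" where
  "tau i e Pt = (\<Sum>e'\<in>expvecs i.
      Poly_Mapping.single e' (of_nat (mbinom (e + e') e) * Poly_Mapping.lookup (Pt (i + mdeg e)) (e + e')))"

definition DeltaQ :: "nat \<Rightarrow> (nat \<Rightarrow> ('k::{finite,linorder}, ('k, 'a::field) ratfun) mpoly)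
    \<Rightarrow> (nat \<Rightarrow> ('k, 'a) mpoly) \<Rightarrow> ('k \<Rightarrow>\<^sub>0 nat) \<Rightarrow> ('k \<Rightarrow> 'a) \<Rightarrow> ('k, 'a) ratfun" where
  "DeltaQ m Q Pt e a = (\<Sum>i\<in>{1..m}. \<Sum>e'\<in>{e'. \<forall>j. Poly_Mapping.lookup e' j \<le> Poly_Mapping.lookup e j}.
      mpeval (hasse e' (Q i)) (\<lambda>j. rconst (a j)) * rpoly (tau (i - 1) (e - e') Pt))"

end

theory Submission
  imports Defs "HOL-Library.FuncSet" "HOL-Computational_Algebra.Polynomial"
begin

text \<open>Suppose R = \<Sum>_i Q_i \<Delta>_(i-1)(f) is nonzero.  By the Leibniz and composition rules for
  Hasse derivatives, the e-th Hasse derivative of R at a point a of S^k with P(a) = \<Delta>(f)(a) is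
  \<Delta>_e(Q)(a), so R vanishes to order at least s - m at each of these T points.  Since R has total
  degree at most D + d, the Schwartz--Zippel lemma with multiplicities allows at most
  (D + d) |S|^(k-1) / (s - m) < T such points.  That lemma is proved by induction on the variables:
  on each line parallel to the axis of a new variable, the orders of vanishing are bounded by root
  multiplicities of a univariate polynomial whose leading coefficient comes from the top power of
  that variable.\<close>

abbreviation lookup :: "('a \<Rightarrow>\<^sub>0 'b::zero) \<Rightarrow> 'a \<Rightarrow> 'b" where
  "lookup \<equiv> Poly_Mapping.lookup"
abbreviation keys :: "('a \<Rightarrow>\<^sub>0 'b::zero) \<Rightarrow> 'a set" where
  "keys \<equiv> Poly_Mapping.keys"
abbreviation single :: "'a \<Rightarrow> 'b::zero \<Rightarrow> 'a \<Rightarrow>\<^sub>0 'b" where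
  "single \<equiv> Poly_Mapping.single"

section \<open>Exponent vectors\<close>

lemma mdeg_eq_sum_UNIV: "mdeg (e::'k::finite \<Rightarrow>\<^sub>0 nat) = (\<Sum>j\<in>UNIV. lookup e j)"
  unfolding mdeg_def by (rule sum.mono_neutral_left) (auto simp: in_keys_iff)

lemma mdeg_zero [simp]: "mdeg 0 = 0"
  by (simp add: mdeg_def)

lemma mdeg_add: "mdeg ((e::'k::finite \<Rightarrow>\<^sub>0 nat) + e') = mdeg e + mdeg e'"
  by (simp add: mdeg_eq_sum_UNIV lookup_add sum.distrib)

lemma mdeg_single: "mdeg (single (j::'k::finite) n) = n"
  by (simp add: mdeg_eq_sum_UNIV lookup_single when_def)

lemma mdeg_diff_le: "mdeg ((e::'k::finite \<Rightarrow>\<^sub>0 nat) - e') \<le> mdeg e"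
  unfolding mdeg_eq_sum_UNIV by (rule sum_mono) (simp add: lookup_minus)

lemma lookup_le_mdeg: "lookup (e::'k::finite \<Rightarrow>\<^sub>0 nat) j \<le> mdeg e"
  unfolding mdeg_eq_sum_UNIV by (rule member_le_sum) auto

lemma mbinom_eq_prod_UNIV:
  "mbinom \<alpha> (e::'k::finite \<Rightarrow>\<^sub>0 nat) = (\<Prod>j\<in>UNIV. lookup \<alpha> j choose lookup e j)"
  unfolding mbinom_def by (rule prod.mono_neutral_left) (auto simp: in_keys_iff)

lemma mbinom_self: "mbinom (\<alpha>::'k::finite \<Rightarrow>\<^sub>0 nat) \<alpha> = 1"
  by (simp add: mbinom_eq_prod_UNIV)

lemma mbinom_ne_zero_imp_le:
  assumes "mbinom \<alpha> (e::'k::finite \<Rightarrow>\<^sub>0 nat) \<noteq> 0" shows "lookup e j \<le> lookup \<alpha> j"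
proof -
  have "(lookup \<alpha> j choose lookup e j) \<noteq> 0" using assms by (auto simp: mbinom_eq_prod_UNIV)
  then show ?thesis by (simp add: binomial_eq_0_iff)
qed

abbreviation exps_below :: "('k \<Rightarrow>\<^sub>0 nat) \<Rightarrow> ('k \<Rightarrow>\<^sub>0 nat) set" where
  "exps_below e \<equiv> {e'. \<forall>j. lookup e' j \<le> lookup e j}"

lemma bij_betw_lookup_exps_below:
  "bij_betw lookup (exps_below (e::'k::finite \<Rightarrow>\<^sub>0 nat)) (PiE UNIV (\<lambda>j. {..lookup e j}))"
proof (rule bij_betw_imageI)
  show "inj_on lookup (exps_below e)" by (auto intro: inj_onI poly_mapping_eqI)
  have "f \<in> lookup ` exps_below e" if "f \<in> PiE UNIV (\<lambda>j. {..lookup e j})" for f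
    using that by (intro image_eqI[of _ _ "Abs_poly_mapping f"]) auto
  then show "lookup ` exps_below e = PiE UNIV (\<lambda>j. {..lookup e j})" by auto
qed

lemma finite_exps_below: "finite (exps_below (e::'k::finite \<Rightarrow>\<^sub>0 nat))"
  using bij_betw_finite[OF bij_betw_lookup_exps_below[of e]] by (simp add: finite_PiE)

lemma finite_expvecs: "finite (expvecs n :: ('k::finite \<Rightarrow>\<^sub>0 nat) set)"
proof -
  have "expvecs n \<subseteq> exps_below (Abs_poly_mapping (\<lambda>_::'k. n))"
    using lookup_le_mdeg by (auto simp: expvecs_def)
  then show ?thesis using finite_exps_below finite_subset by blast
qed

lemma mbinom_vandermonde:
  fixes \<alpha> \<beta> e :: "'k::finite \<Rightarrow>\<^sub>0 nat"
  shows "(\<Sum>e'\<in>exps_below e. mbinom \<alpha> e' * mbinom \<beta> (e - e')) = mbinom (\<alpha> + \<beta>) e"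
proof -
  define G where "G j x = (lookup \<alpha> j choose x) * (lookup \<beta> j choose (lookup e j - x))" for j x
  have "(\<Sum>e'\<in>exps_below e. mbinom \<alpha> e' * mbinom \<beta> (e - e'))
      = (\<Sum>e'\<in>exps_below e. (\<lambda>f. \<Prod>j\<in>UNIV. G j (f j)) (lookup e'))"
    by (simp add: mbinom_eq_prod_UNIV G_def lookup_minus prod.distrib)
  also have "\<dots> = (\<Sum>f\<in>PiE UNIV (\<lambda>j. {..lookup e j}). \<Prod>j\<in>UNIV. G j (f j))"
    by (rule sum.reindex_bij_betw[OF bij_betw_lookup_exps_below])
  also have "\<dots> = (\<Prod>j\<in>UNIV. \<Sum>x\<in>{..lookup e j}. G j x)"
    by (rule prod_sum_PiE[symmetric]) auto
  also have "\<dots> = mbinom (\<alpha> + \<beta>) e"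
    by (simp add: G_def vandermonde mbinom_eq_prod_UNIV lookup_add)
  finally show ?thesis .
qed

lemma choose_mult_choose_diff:
  "(a choose x) * ((a - x) choose y) = ((x + y) choose y) * (a choose (x + y))"
proof (cases "x + y \<le> a")
  case True
  then have "(a choose (x + y)) * ((x + y) choose x) = (a choose x) * ((a - x) choose (x + y - x))"
    by (intro choose_mult) auto
  then show ?thesis by (simp add: binomial_symmetric[of x "x + y"] mult_ac)
next
  case False
  then show ?thesis by (cases "x \<le> a") (auto simp: binomial_eq_0)
qed

lemma mbinom_mult_mbinom_diff:
  fixes \<alpha> e u :: "'k::finite \<Rightarrow>\<^sub>0 nat"
  shows "mbinom \<alpha> e * mbinom (\<alpha> - e) u = mbinom (e + u) u * mbinom \<alpha> (e + u)"
  by (simp add: mbinom_eq_prod_UNIV lookup_minus lookup_add choose_mult_choose_diff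
      flip: prod.distrib)

section \<open>Evaluation and Hasse derivatives\<close>

definition sum_terms :: "('a \<Rightarrow> 'b::zero \<Rightarrow> 'c::comm_monoid_add) \<Rightarrow> ('a \<Rightarrow>\<^sub>0 'b) \<Rightarrow> 'c" where
  "sum_terms h p = (\<Sum>\<alpha>\<in>keys p. h \<alpha> (lookup p \<alpha>))"

lemma sum_terms_superset:
  assumes "finite A" "keys p \<subseteq> A" "\<And>\<alpha>. h \<alpha> 0 = 0"
  shows "sum_terms h p = (\<Sum>\<alpha>\<in>A. h \<alpha> (lookup p \<alpha>))"
  unfolding sum_terms_def using assms
  by (intro sum.mono_neutral_left) (auto simp: in_keys_iff)

lemma sum_terms_zero [simp]: "sum_terms h 0 = 0"
  by (simp add: sum_terms_def)

lemma sum_terms_single: "(\<And>\<alpha>. h \<alpha> 0 = 0) \<Longrightarrow> sum_terms h (single \<alpha> c) = h \<alpha> c"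
  by (simp add: sum_terms_def)

lemma sum_terms_add:
  assumes "\<And>\<alpha> x y. h \<alpha> (x + y) = h \<alpha> x + h \<alpha> y" "\<And>\<alpha>. h \<alpha> 0 = 0"
  shows "sum_terms h (p + q) = sum_terms h p + sum_terms h q"
proof -
  let ?A = "keys p \<union> keys q"
  have "sum_terms h (p + q) = (\<Sum>\<alpha>\<in>?A. h \<alpha> (lookup (p + q) \<alpha>))"
    using keys_add[of p q] assms by (intro sum_terms_superset) auto
  also have "\<dots> = (\<Sum>\<alpha>\<in>?A. h \<alpha> (lookup p \<alpha>)) + (\<Sum>\<alpha>\<in>?A. h \<alpha> (lookup q \<alpha>))"
    by (simp add: lookup_add assms(1) sum.distrib)
  also have "\<dots> = sum_terms h p + sum_terms h q"
    using sum_terms_superset[of ?A p h] sum_terms_superset[of ?A q h] assms by auto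
  finally show ?thesis .
qed

lemma sum_terms_sum:
  assumes "\<And>\<alpha> x y. h \<alpha> (x + y) = h \<alpha> x + h \<alpha> y" "\<And>\<alpha>. h \<alpha> 0 = 0"
  shows "sum_terms h (\<Sum>i\<in>I. p i) = (\<Sum>i\<in>I. sum_terms h (p i))"
  by (induction I rule: infinite_finite_induct) (simp_all add: sum_terms_add[OF assms])

lemma poly_mapping_sum_single: "p = (\<Sum>\<alpha>\<in>keys p. single \<alpha> (lookup p \<alpha>))"
  by (rule poly_mapping_eqI) (simp add: lookup_sum lookup_single when_def in_keys_iff)

lemma poly_mapping_induct [case_names zero single add]:
  fixes p :: "'a \<Rightarrow>\<^sub>0 'b::comm_monoid_add"
  assumes "Pr 0" "\<And>\<alpha> c. Pr (single \<alpha> c)" "\<And>p q. Pr p \<Longrightarrow> Pr q \<Longrightarrow> Pr (p + q)"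
  shows "Pr p"
proof -
  have "Pr (\<Sum>\<alpha>\<in>A. single \<alpha> (lookup p \<alpha>))" for A
    by (induction A rule: infinite_finite_induct) (auto intro: assms)
  then show ?thesis using poly_mapping_sum_single[of p] by metis
qed

lemma single_sum: "single k (\<Sum>i\<in>I. f i) = (\<Sum>i\<in>I. single k (f i))"
  by (induction I rule: infinite_finite_induct) (auto simp: single_add)

lemma single_of_nat_mult:
  fixes c :: "'b::comm_semiring_1"
  shows "single \<alpha> (of_nat n * c) = of_nat n * (single \<alpha> c :: 'a::comm_monoid_add \<Rightarrow>\<^sub>0 'b)"
  using mult_single[of 0 "of_nat n" \<alpha> c] by simp

definition monomial_value :: "('k \<Rightarrow>\<^sub>0 nat) \<Rightarrow> ('k \<Rightarrow> 'b::comm_semiring_1) \<Rightarrow> 'b" where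
  "monomial_value \<alpha> a = (\<Prod>j\<in>keys \<alpha>. a j ^ lookup \<alpha> j)"

lemma monomial_value_zero [simp]: "monomial_value 0 a = 1"
  by (simp add: monomial_value_def)

lemma monomial_value_eq_prod_UNIV:
  "monomial_value (\<alpha>::'k::finite \<Rightarrow>\<^sub>0 nat) a = (\<Prod>j\<in>UNIV. a j ^ lookup \<alpha> j)"
  unfolding monomial_value_def by (rule prod.mono_neutral_left) (auto simp: in_keys_iff)

lemma monomial_value_add:
  "monomial_value ((\<alpha>::'k::finite \<Rightarrow>\<^sub>0 nat) + \<beta>) a = monomial_value \<alpha> a * monomial_value \<beta> a"
  by (simp add: monomial_value_eq_prod_UNIV lookup_add power_add prod.distrib)

lemma mpeval_eq_sum_terms: "mpeval p a = sum_terms (\<lambda>\<alpha> c. c * monomial_value \<alpha> a) p"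
  by (simp add: mpeval_def sum_terms_def monomial_value_def)

lemma mpeval_zero [simp]: "mpeval 0 a = 0"
  by (simp add: mpeval_eq_sum_terms)

lemma mpeval_single: "mpeval (single \<alpha> c) a = c * monomial_value \<alpha> a"
  unfolding mpeval_eq_sum_terms by (rule sum_terms_single) simp

lemma mpeval_add: "mpeval (p + q) a = mpeval p a + mpeval q a"
  unfolding mpeval_eq_sum_terms by (rule sum_terms_add) (simp_all add: distrib_right)

lemma mpeval_sum: "mpeval (\<Sum>i\<in>I. p i) a = (\<Sum>i\<in>I. mpeval (p i) a)"
  unfolding mpeval_eq_sum_terms by (rule sum_terms_sum) (simp_all add: distrib_right)

lemma mpeval_mult:
  fixes p q :: "('k::finite, 'b::comm_semiring_1) mpoly"
  shows "mpeval (p * q) a = mpeval p a * mpeval q a"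
proof (induction p rule: poly_mapping_induct)
  case (single \<alpha> c)
  show ?case
  proof (induction q rule: poly_mapping_induct)
    case (single \<beta> d)
    then show ?case by (simp add: mult_single mpeval_single monomial_value_add mult_ac)
  qed (simp_all add: distrib_left mpeval_add)
qed (simp_all add: distrib_right mpeval_add)

lemma mpeval_of_nat [simp]: "mpeval (of_nat n) a = of_nat n"
  by (simp flip: single_of_nat add: mpeval_single)

lemma hasse_eq_sum_terms: "hasse e p = sum_terms (\<lambda>\<alpha> c. single (\<alpha> - e) (of_nat (mbinom \<alpha> e) * c)) p"
  by (simp add: hasse_def sum_terms_def)

lemma hasse_zero [simp]: "hasse e 0 = 0"
  by (simp add: hasse_eq_sum_terms)

lemma hasse_single: "hasse e (single \<alpha> c) = single (\<alpha> - e) (of_nat (mbinom \<alpha> e) * c)"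
  unfolding hasse_eq_sum_terms by (rule sum_terms_single) simp

lemma hasse_add: "hasse e (p + q) = hasse e p + hasse e q"
  unfolding hasse_eq_sum_terms by (rule sum_terms_add) (simp_all add: distrib_left single_add)

lemma hasse_sum: "hasse e (\<Sum>i\<in>I. p i) = (\<Sum>i\<in>I. hasse e (p i))"
  unfolding hasse_eq_sum_terms by (rule sum_terms_sum) (simp_all add: distrib_left single_add)

lemma mpeval_hasse:
  "mpeval (hasse e p) a = (\<Sum>\<alpha>\<in>keys p. of_nat (mbinom \<alpha> e) * lookup p \<alpha> * monomial_value (\<alpha> - e) a)"
  by (simp add: hasse_def mpeval_sum mpeval_single)

lemma keys_hasse: "\<gamma> \<in> keys (hasse e p) \<Longrightarrow> \<exists>\<alpha>\<in>keys p. \<gamma> = \<alpha> - e"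
  using keys_sum[of "\<lambda>\<alpha>. single (\<alpha> - e) (of_nat (mbinom \<alpha> e) * lookup p \<alpha>)" "keys p"]
  by (auto simp: hasse_def split: if_splits)

lemma hasse_single_mult_single:
  fixes \<alpha> \<beta> e :: "'k::finite \<Rightarrow>\<^sub>0 nat" and c d :: "'b::comm_semiring_1"
  shows "hasse e (single \<alpha> c * single \<beta> d)
    = (\<Sum>e'\<in>exps_below e. hasse e' (single \<alpha> c) * hasse (e - e') (single \<beta> d))"
proof -
  have summand: "hasse e' (single \<alpha> c) * hasse (e - e') (single \<beta> d) =
      single (\<alpha> + \<beta> - e) (of_nat (mbinom \<alpha> e' * mbinom \<beta> (e - e')) * (c * d))"
    if "e' \<in> exps_below e" for e'
  proof (cases "mbinom \<alpha> e' = 0 \<or> mbinom \<beta> (e - e') = 0")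
    case False
    have "(\<alpha> - e') + (\<beta> - (e - e')) = \<alpha> + \<beta> - e"
    proof (rule poly_mapping_eqI)
      fix j
      show "lookup ((\<alpha> - e') + (\<beta> - (e - e'))) j = lookup (\<alpha> + \<beta> - e) j"
        using mbinom_ne_zero_imp_le[of \<alpha> e' j] mbinom_ne_zero_imp_le[of \<beta> "e - e'" j] False that
        by (simp add: lookup_add lookup_minus)
    qed
    then show ?thesis by (simp add: hasse_single mult_single mult_ac)
  qed (auto simp: hasse_single mult_single)
  have "(\<Sum>e'\<in>exps_below e. hasse e' (single \<alpha> c) * hasse (e - e') (single \<beta> d))
      = single (\<alpha> + \<beta> - e) (of_nat (\<Sum>e'\<in>exps_below e. mbinom \<alpha> e' * mbinom \<beta> (e - e')) * (c * d))"
    by (simp add: summand single_sum of_nat_sum sum_distrib_right)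
  also have "\<dots> = hasse e (single \<alpha> c * single \<beta> d)"
    by (simp add: mbinom_vandermonde hasse_single mult_single)
  finally show ?thesis by simp
qed

lemma hasse_mult:
  fixes p q :: "('k::finite, 'b::comm_semiring_1) mpoly"
  shows "hasse e (p * q) = (\<Sum>e'\<in>exps_below e. hasse e' p * hasse (e - e') q)"
proof (induction p rule: poly_mapping_induct)
  case (single \<alpha> c)
  show ?case
    by (induction q rule: poly_mapping_induct)
       (simp_all add: distrib_left hasse_add sum.distrib hasse_single_mult_single)
qed (simp_all add: distrib_right hasse_add sum.distrib)

lemma hasse_hasse:
  fixes p :: "('k::finite, 'b::comm_semiring_1) mpoly"
  shows "hasse u (hasse e p) = of_nat (mbinom (e + u) u) * hasse (e + u) p"
proof (induction p rule: poly_mapping_induct)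
  case (single \<alpha> c)
  have "\<alpha> - e - u = \<alpha> - (e + u)"
    by (rule poly_mapping_eqI) (simp add: lookup_minus lookup_add)
  moreover have "of_nat (mbinom (\<alpha> - e) u) * (of_nat (mbinom \<alpha> e) * c) =
      (of_nat (mbinom (e + u) u) * (of_nat (mbinom \<alpha> (e + u)) * c) :: 'b)"
    using arg_cong[OF mbinom_mult_mbinom_diff[of \<alpha> e u], of "of_nat :: nat \<Rightarrow> 'b"]
    by (simp add: mult_ac)
  ultimately have "hasse u (hasse e (single \<alpha> c))
      = single (\<alpha> - (e + u)) (of_nat (mbinom (e + u) u) * (of_nat (mbinom \<alpha> (e + u)) * c))"
    by (simp add: hasse_single)
  then show ?case by (simp only: hasse_single single_of_nat_mult)
qed (simp_all add: hasse_add distrib_left)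

lemma lookup_map_zero: "\<phi> 0 = 0 \<Longrightarrow> lookup (Poly_Mapping.map \<phi> p) k = \<phi> (lookup p k)"
  by (simp add: map.rep_eq when_def)

lemma poly_mapping_map_zero [simp]: "Poly_Mapping.map \<phi> 0 = 0"
  by (rule poly_mapping_eqI) (simp add: map.rep_eq)

lemma poly_mapping_map_add:
  assumes "\<phi> 0 = 0" "\<And>x y. \<phi> (x + y) = \<phi> x + \<phi> y"
  shows "Poly_Mapping.map \<phi> (p + q) = Poly_Mapping.map \<phi> p + Poly_Mapping.map \<phi> q"
  by (rule poly_mapping_eqI) (simp add: lookup_map_zero assms lookup_add)

lemma keys_map_subset: "keys (Poly_Mapping.map \<phi> p) \<subseteq> keys p"
  by (auto simp: in_keys_iff map.rep_eq when_def)

lemma hasse_map: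
  fixes \<phi> :: "'b::comm_semiring_1 \<Rightarrow> 'c::comm_semiring_1"
  assumes "\<phi> 0 = 0" "\<And>x y. \<phi> (x + y) = \<phi> x + \<phi> y" "\<And>n x. \<phi> (of_nat n * x) = of_nat n * \<phi> x"
  shows "hasse e (Poly_Mapping.map \<phi> p) = Poly_Mapping.map \<phi> (hasse e p)"
  by (induction p rule: poly_mapping_induct)
     (simp_all add: assms hasse_single hasse_add poly_mapping_map_add)

section \<open>Hasse derivatives of \<Delta>_i(f) and \<Delta>_e(Q)\<close>

lemma rpoly_zero [simp]: "rpoly 0 = 0"
  by (simp add: rpoly_def Zero_fract_def)

lemma rpoly_add: "rpoly (p + q) = rpoly p + rpoly q"
  by (simp add: rpoly_def)

lemma rpoly_mult: "rpoly (p * q) = rpoly p * rpoly q"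
  by (simp add: rpoly_def)

lemma rpoly_sum: "rpoly (\<Sum>i\<in>I. p i) = (\<Sum>i\<in>I. rpoly (p i))"
  by (induction I rule: infinite_finite_induct) (auto simp: rpoly_add)

lemma rpoly_of_nat: "rpoly (of_nat n) = of_nat n"
  unfolding rpoly_def by (rule of_nat_fract[symmetric])

lemma rconst_eq_rpoly: "rconst c = rpoly (single 0 c)"
  by (simp add: rconst_def rpoly_def)

lemma rconst_mult: "rconst (x * y) = rconst x * rconst y"
  by (simp add: rconst_eq_rpoly mult_single flip: rpoly_mult)

lemma rconst_one [simp]: "rconst 1 = 1"
  by (simp add: rconst_def One_fract_def)

lemma rconst_prod: "rconst (\<Prod>i\<in>I. f i) = (\<Prod>i\<in>I. rconst (f i))"
  by (induction I rule: infinite_finite_induct) (simp_all add: rconst_mult)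

lemma rconst_power: "rconst (x ^ n) = rconst x ^ n"
  by (induction n) (simp_all add: rconst_mult)

lemma inj_rpoly: "inj rpoly"
  by (intro injI) (simp add: rpoly_def eq_fract)

lemma inj_rconst: "inj rconst"
  by (simp add: inj_def rconst_eq_rpoly inj_rpoly[THEN inj_eq] inj_single[THEN inj_eq])

lemma monomial_value_rconst: "monomial_value \<alpha> (\<lambda>j. rconst (a j)) = rconst (monomial_value \<alpha> a)"
  by (simp add: monomial_value_def rconst_prod rconst_power)

lemma mpeval_map_rpoly_single:
  fixes a :: "'k::{finite,linorder} \<Rightarrow> 'a::field" and p :: "('k, 'a) mpoly"
  shows "mpeval (Poly_Mapping.map (\<lambda>c. rpoly (single e c)) p) (\<lambda>j. rconst (a j))
    = rpoly (single e (mpeval p a))"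
proof (induction p rule: poly_mapping_induct)
  case (single \<alpha> c)
  show ?case
    by (simp add: mpeval_single monomial_value_rconst)
       (simp add: rconst_eq_rpoly mult_single flip: rpoly_mult)
qed (simp_all add: poly_mapping_map_add single_add rpoly_add mpeval_add)

lemma lookup_DeltaAt:
  "lookup (DeltaAt f n a) \<gamma> = (if mdeg \<gamma> = n then mpeval (hasse \<gamma> f) a else 0)"
proof -
  have "lookup (DeltaAt f n a) \<gamma> = (\<Sum>e\<in>expvecs n. if e = \<gamma> then mpeval (hasse e f) a else 0)"
    by (simp add: DeltaAt_def lookup_sum lookup_single when_def)
  also have "\<dots> = (if mdeg \<gamma> = n then mpeval (hasse \<gamma> f) a else 0)"
    by (subst sum.delta[OF finite_expvecs]) (simp add: expvecs_def)
  finally show ?thesis .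
qed

text \<open>By the composition rule for Hasse derivatives only the entries \<Delta>_(n+|u|)(f)(a) enter.\<close>

lemma mpeval_hasse_DeltaPoly:
  fixes f :: "('k::{finite,linorder}, 'a::field) mpoly"
  assumes "n + mdeg u < s" and "\<forall>i<s. Pa i = DeltaAt f i a"
  shows "mpeval (hasse u (DeltaPoly f n)) (\<lambda>j. rconst (a j)) = rpoly (tau n u Pa)"
proof -
  have hasse_map_rpoly: "hasse u (Poly_Mapping.map (\<lambda>c. rpoly (single e c)) p)
      = Poly_Mapping.map (\<lambda>c. rpoly (single e c)) (hasse u p)" for e and p :: "('k, 'a) mpoly"
    by (rule hasse_map)
       (simp_all add: single_add rpoly_add rpoly_mult rpoly_of_nat single_of_nat_mult)
  have "mpeval (hasse u (DeltaPoly f n)) (\<lambda>j. rconst (a j)) =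
      (\<Sum>e\<in>expvecs n. rpoly (single e (of_nat (mbinom (e + u) u) * mpeval (hasse (e + u) f) a)))"
    by (simp add: DeltaPoly_def hasse_sum mpeval_sum hasse_map_rpoly mpeval_map_rpoly_single
        hasse_hasse mpeval_mult)
  also have "\<dots> = rpoly (tau n u Pa)"
    using assms by (simp add: tau_def rpoly_sum lookup_DeltaAt expvecs_def mdeg_add add.commute)
  finally show ?thesis .
qed

lemma mpeval_hasse_eq_DeltaQ:
  fixes Q :: "nat \<Rightarrow> ('k::{finite,linorder}, ('k, 'a::field) ratfun) mpoly"
  assumes "\<forall>i<s. Pa i = DeltaAt f i a" and "mdeg e + m + 1 \<le> s"
  shows "mpeval (hasse e (\<Sum>i\<in>{1..m}. Q i * DeltaPoly f (i - 1))) (\<lambda>j. rconst (a j))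
    = DeltaQ m Q Pa e a"
  unfolding DeltaQ_def hasse_sum hasse_mult mpeval_sum mpeval_mult
proof (intro sum.cong refl)
  fix i e' assume "i \<in> {1..m}" "e' \<in> exps_below e"
  then have "i - 1 + mdeg (e - e') < s"
    using mdeg_diff_le[of e e'] assms(2) by auto
  then show "mpeval (hasse e' (Q i)) (\<lambda>j. rconst (a j))
      * mpeval (hasse (e - e') (DeltaPoly f (i - 1))) (\<lambda>j. rconst (a j))
      = mpeval (hasse e' (Q i)) (\<lambda>j. rconst (a j)) * rpoly (tau (i - 1) (e - e') Pa)"
    using mpeval_hasse_DeltaPoly[OF _ assms(1)] by simp
qed

section \<open>Total degree\<close>

lemma mdeg_le_tdeg: "\<alpha> \<in> keys p \<Longrightarrow> mdeg \<alpha> \<le> tdeg p"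
  unfolding tdeg_def by (rule Max_ge) auto

lemma tdeg_leI: "(\<And>\<alpha>. \<alpha> \<in> keys p \<Longrightarrow> mdeg \<alpha> \<le> n) \<Longrightarrow> tdeg p \<le> n"
  unfolding tdeg_def by (subst Max_le_iff) auto

lemma tdeg_attained:
  assumes "p \<noteq> 0" shows "\<exists>\<alpha>\<in>keys p. mdeg \<alpha> = tdeg p"
proof -
  obtain \<beta> where \<beta>: "\<beta> \<in> keys p" using assms by (metis keys_eq_empty ex_in_conv)
  have "tdeg p \<in> insert 0 (mdeg ` keys p)" unfolding tdeg_def by (rule Max_in) auto
  with \<beta> mdeg_le_tdeg[OF \<beta>] show ?thesis by auto
qed

lemma tdeg_mult_le: "tdeg (p * q) \<le> tdeg p + tdeg (q :: ('k::finite, 'b::comm_semiring_1) mpoly)"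
proof (rule tdeg_leI)
  fix \<gamma> assume "\<gamma> \<in> keys (p * q)"
  from subsetD[OF keys_mult this] obtain \<alpha> \<beta> where "\<gamma> = \<alpha> + \<beta>" "\<alpha> \<in> keys p" "\<beta> \<in> keys q"
    by blast
  then show "mdeg \<gamma> \<le> tdeg p + tdeg q"
    by (simp add: mdeg_add add_mono mdeg_le_tdeg)
qed

lemma tdeg_sum_le:
  assumes "\<And>i. i \<in> I \<Longrightarrow> tdeg (p i) \<le> n" shows "tdeg (\<Sum>i\<in>I. p i) \<le> n"
proof (rule tdeg_leI)
  fix \<alpha> assume "\<alpha> \<in> keys (\<Sum>i\<in>I. p i)"
  from subsetD[OF keys_sum this] obtain i where "i \<in> I" "\<alpha> \<in> keys (p i)" by blast
  then show "mdeg \<alpha> \<le> n" using assms mdeg_le_tdeg order.trans by blast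
qed

lemma tdeg_hasse_le: "tdeg (hasse e (p :: ('k::finite, 'b::comm_semiring_1) mpoly)) \<le> tdeg p"
proof (rule tdeg_leI)
  fix \<gamma> assume "\<gamma> \<in> keys (hasse e p)"
  then obtain \<alpha> where "\<alpha> \<in> keys p" "\<gamma> = \<alpha> - e" using keys_hasse by blast
  then show "mdeg \<gamma> \<le> tdeg p" using mdeg_diff_le[of \<alpha> e] mdeg_le_tdeg[of \<alpha> p] by simp
qed

lemma tdeg_map_le: "tdeg (Poly_Mapping.map \<phi> p) \<le> tdeg p"
  by (rule tdeg_leI) (meson keys_map_subset mdeg_le_tdeg subsetD)

lemma tdeg_DeltaPoly_le: "tdeg (DeltaPoly f n) \<le> tdeg f"
  unfolding DeltaPoly_def
  using tdeg_map_le tdeg_hasse_le by (intro tdeg_sum_le) (blast intro: order.trans)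

section \<open>Order of vanishing\<close>

text \<open>Junk value (the LEAST of an empty set) for p = 0.\<close>

definition vanishing_order :: "('k, 'b::comm_semiring_1) mpoly \<Rightarrow> ('k \<Rightarrow> 'b) \<Rightarrow> nat" where
  "vanishing_order p a = (LEAST n. \<exists>e. mdeg e = n \<and> mpeval (hasse e p) a \<noteq> 0)"

lemma mpeval_hasse_top_exponent:
  fixes p :: "('k::finite, 'b::comm_semiring_1) mpoly"
  assumes \<alpha>: "\<alpha> \<in> keys p" "mdeg \<alpha> = tdeg p"
  shows "mpeval (hasse \<alpha> p) a = lookup p \<alpha>"
proof -
  have "mbinom \<beta> \<alpha> = 0" if \<beta>: "\<beta> \<in> keys p" "\<beta> \<noteq> \<alpha>" for \<beta>
  proof (rule ccontr)
    assume "mbinom \<beta> \<alpha> \<noteq> 0"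
    then have le: "lookup \<alpha> j \<le> lookup \<beta> j" for j by (rule mbinom_ne_zero_imp_le)
    have "(\<Sum>j\<in>UNIV. lookup \<beta> j) \<le> (\<Sum>j\<in>UNIV. lookup \<alpha> j)"
      using mdeg_le_tdeg[OF \<beta>(1)] \<alpha> by (simp add: mdeg_eq_sum_UNIV)
    moreover have "(\<Sum>j\<in>UNIV. lookup \<alpha> j) \<le> (\<Sum>j\<in>UNIV. lookup \<beta> j)"
      by (rule sum_mono) (rule le)
    ultimately have "lookup \<alpha> j = lookup \<beta> j" for j
      by (intro sum_mono_inv[of "lookup \<alpha>" UNIV "lookup \<beta>"]) (simp_all add: le)
    with \<beta>(2) show False by (auto intro: poly_mapping_eqI)
  qed
  then have "mpeval (hasse \<alpha> p) a = of_nat (mbinom \<alpha> \<alpha>) * lookup p \<alpha> * monomial_value (\<alpha> - \<alpha>) a"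
    unfolding mpeval_hasse by (subst sum.remove[OF finite_keys \<alpha>(1)]) simp
  then show ?thesis by (simp add: mbinom_self)
qed

lemma vanishing_order_le: "mpeval (hasse e p) a \<noteq> 0 \<Longrightarrow> vanishing_order p a \<le> mdeg e"
  unfolding vanishing_order_def by (rule Least_le) blast

lemma exists_hasse_ne_zero:
  fixes p :: "('k::finite, 'b::comm_semiring_1) mpoly"
  assumes "p \<noteq> 0" obtains \<alpha> where "mdeg \<alpha> = tdeg p" "mpeval (hasse \<alpha> p) a \<noteq> 0"
proof -
  obtain \<alpha> where \<alpha>: "\<alpha> \<in> keys p" "mdeg \<alpha> = tdeg p" using tdeg_attained[OF assms] by blast
  then have "mpeval (hasse \<alpha> p) a \<noteq> 0" by (simp add: mpeval_hasse_top_exponent in_keys_iff)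
  with \<alpha>(2) show ?thesis by (rule that)
qed

lemma vanishing_order_attained:
  fixes p :: "('k::finite, 'b::comm_semiring_1) mpoly"
  assumes "p \<noteq> 0"
  obtains e where "mdeg e = vanishing_order p a" "mpeval (hasse e p) a \<noteq> 0"
proof -
  obtain \<alpha> where "mpeval (hasse \<alpha> p) a \<noteq> 0" using exists_hasse_ne_zero[OF assms] by blast
  then have "\<exists>n e. mdeg e = n \<and> mpeval (hasse e p) a \<noteq> 0" by blast
  then have "\<exists>e. mdeg e = vanishing_order p a \<and> mpeval (hasse e p) a \<noteq> 0"
    unfolding vanishing_order_def by (rule LeastI_ex)
  with that show ?thesis by blast
qed

lemma vanishing_order_le_tdeg:
  fixes p :: "('k::finite, 'b::comm_semiring_1) mpoly"
  assumes "p \<noteq> 0" shows "vanishing_order p a \<le> tdeg p"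
proof -
  obtain \<alpha> where "mdeg \<alpha> = tdeg p" "mpeval (hasse \<alpha> p) a \<noteq> 0"
    using exists_hasse_ne_zero[OF assms] by blast
  with vanishing_order_le[of \<alpha> p a] show ?thesis by simp
qed

lemma vanishing_order_geI:
  fixes p :: "('k::finite, 'b::comm_semiring_1) mpoly"
  assumes "p \<noteq> 0" and "\<And>e. mdeg e < t \<Longrightarrow> mpeval (hasse e p) a = 0"
  shows "t \<le> vanishing_order p a"
proof (rule ccontr)
  assume "\<not> t \<le> vanishing_order p a"
  moreover obtain e where "mdeg e = vanishing_order p a" "mpeval (hasse e p) a \<noteq> 0"
    using vanishing_order_attained[OF assms(1)] by blast
  ultimately show False using assms(2)[of e] by simp
qed

section \<open>Restriction to coordinate lines\<close>

abbreviation drop_var :: "'k \<Rightarrow> ('k \<Rightarrow>\<^sub>0 nat) \<Rightarrow> ('k \<Rightarrow>\<^sub>0 nat)" where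
  "drop_var v \<alpha> \<equiv> Poly_Mapping.update v 0 \<alpha>"

lemma drop_var_add_single: "drop_var v \<alpha> + single v (lookup \<alpha> v) = \<alpha>"
  by (rule poly_mapping_eqI) (simp add: lookup_add lookup_update lookup_single when_def)

lemma mdeg_drop_var: "mdeg (drop_var v (\<alpha>::'k::finite \<Rightarrow>\<^sub>0 nat)) + lookup \<alpha> v = mdeg \<alpha>"
  using arg_cong[OF drop_var_add_single[of v \<alpha>], of mdeg] by (simp add: mdeg_add mdeg_single)

definition var_coeff :: "('k, 'b::comm_monoid_add) mpoly \<Rightarrow> 'k \<Rightarrow> nat \<Rightarrow> ('k, 'b) mpoly" where
  "var_coeff p v t = (\<Sum>\<alpha>\<in>{\<alpha>\<in>keys p. lookup \<alpha> v = t}. single (drop_var v \<alpha>) (lookup p \<alpha>))"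

lemma keys_var_coeff:
  assumes "\<beta> \<in> keys (var_coeff p v t)"
  obtains \<alpha> where "\<alpha> \<in> keys p" "lookup \<alpha> v = t" "\<beta> = drop_var v \<alpha>"
  using subsetD[OF keys_sum assms[unfolded var_coeff_def]] that by (auto split: if_splits)

lemma lookup_var_coeff:
  assumes "\<alpha> \<in> keys p"
  shows "lookup (var_coeff p v (lookup \<alpha> v)) (drop_var v \<alpha>) = lookup p \<alpha>"
proof -
  have "drop_var v \<beta> = drop_var v \<alpha> \<longleftrightarrow> \<beta> = \<alpha>"
    if "lookup \<beta> v = lookup \<alpha> v" for \<beta>
    using that drop_var_add_single[of v \<alpha>] drop_var_add_single[of v \<beta>] by metis
  then have "lookup (var_coeff p v (lookup \<alpha> v)) (drop_var v \<alpha>)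
      = (\<Sum>\<beta>\<in>{\<beta>\<in>keys p. lookup \<beta> v = lookup \<alpha> v}. if \<beta> = \<alpha> then lookup p \<alpha> else 0)"
    unfolding var_coeff_def lookup_sum lookup_single when_def by (intro sum.cong) auto
  also have "\<dots> = lookup p \<alpha>"
    using assms by (subst sum.delta) auto
  finally show ?thesis .
qed

lemma var_coeff_ne_zero: "\<alpha> \<in> keys p \<Longrightarrow> var_coeff p v (lookup \<alpha> v) \<noteq> 0"
  using lookup_var_coeff[of \<alpha> p v] by (auto simp: in_keys_iff)

lemma keys_var_coeff_subset:
  assumes "\<And>\<alpha>. \<alpha> \<in> keys p \<Longrightarrow> keys \<alpha> \<subseteq> insert v V" and "\<beta> \<in> keys (var_coeff p v t)"
  shows "keys \<beta> \<subseteq> V"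
  using assms(2) by (rule keys_var_coeff) (use assms(1) in \<open>auto simp: keys_update\<close>)

lemma tdeg_var_coeff:
  fixes p :: "('k::finite, 'b::comm_monoid_add) mpoly"
  assumes "var_coeff p v t \<noteq> 0"
  shows "tdeg (var_coeff p v t) + t \<le> tdeg p"
proof -
  obtain \<beta> where "\<beta> \<in> keys (var_coeff p v t)" "mdeg \<beta> = tdeg (var_coeff p v t)"
    using tdeg_attained[OF assms] by blast
  moreover from this(1) obtain \<alpha> where "\<alpha> \<in> keys p" "lookup \<alpha> v = t" "\<beta> = drop_var v \<alpha>"
    by (rule keys_var_coeff)
  ultimately show ?thesis using mdeg_drop_var[of v \<alpha>] mdeg_le_tdeg[of \<alpha> p] by simp
qed

lemma hasse_var_coeff_eq_zero:
  fixes p :: "('k::finite, 'b::comm_semiring_1) mpoly"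
  assumes "lookup e v \<noteq> 0" shows "hasse e (var_coeff p v t) = 0"
proof -
  have "mbinom (drop_var v \<alpha>) e = 0" for \<alpha>
    using mbinom_ne_zero_imp_le[of "drop_var v \<alpha>" e v] assms by (auto simp: lookup_update)
  then show ?thesis by (simp add: var_coeff_def hasse_sum hasse_single)
qed

definition poly_hasse :: "nat \<Rightarrow> 'b::comm_semiring_1 poly \<Rightarrow> 'b \<Rightarrow> 'b" where
  "poly_hasse r g b = coeff (pcompose g [:b, 1:]) r"

lemma pcompose_power: "pcompose (p ^ n) q = pcompose p q ^ n"
  by (induction n) (simp_all add: pcompose_mult pcompose_1)

lemma poly_hasse_sum: "poly_hasse r (\<Sum>i\<in>I. g i) b = (\<Sum>i\<in>I. poly_hasse r (g i) b)"
  by (simp add: poly_hasse_def pcompose_sum coeff_sum)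

lemma poly_hasse_monom:
  "poly_hasse r (monom c n) b = c * (of_nat (n choose r) * b ^ (n - r))"
proof (cases "r \<le> n")
  case True
  then show ?thesis
    by (simp add: poly_hasse_def monom_altdef pcompose_smult pcompose_power pcompose_pCons
        coeff_linear_poly_power)
next
  case False
  have "degree ([:b, 1:] ^ n) \<le> n"
    using degree_power_le[of "[:b, 1:]" n] by simp
  with False show ?thesis
    by (simp add: poly_hasse_def monom_altdef pcompose_smult pcompose_power pcompose_pCons
        coeff_eq_0 binomial_eq_0)
qed

text \<open>Shifting the root b of g to 0, the first nonvanishing Taylor coefficient sits at the
  multiplicity of b.\<close>

lemma poly_hasse_order_ne_zero:
  fixes g :: "'b::field poly"
  assumes "g \<noteq> 0" shows "poly_hasse (order b g) g b \<noteq> 0"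
proof -
  obtain h where h: "g = [:- b, 1:] ^ order b g * h" "\<not> [:- b, 1:] dvd h"
    using order_decomp[OF assms] by blast
  have "pcompose [:- b, 1:] [:b, 1:] = [:0, 1:]"
    by (simp add: pcompose_pCons)
  then have "pcompose g [:b, 1:] = monom 1 (order b g) * pcompose h [:b, 1:]"
    by (subst h(1)) (simp add: pcompose_mult pcompose_power monom_altdef)
  then have "poly_hasse (order b g) g b = poly h b"
    by (simp add: poly_hasse_def coeff_monom_mult pcompose_coeff_0)
  with h(2) show ?thesis by (simp add: poly_eq_0_iff_dvd)
qed

lemma sum_order_le_degree_on:
  fixes g :: "'b::field poly"
  assumes "g \<noteq> 0" "finite S"
  shows "(\<Sum>b\<in>S. order b g) \<le> degree g"
proof -
  have "(\<Sum>b\<in>S. order b g) = (\<Sum>b\<in>S \<inter> {x. poly g x = 0}. order b g)"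
    using assms by (intro sum.mono_neutral_right) (auto simp: order_root)
  also have "\<dots> \<le> (\<Sum>b | poly g b = 0. order b g)"
    using poly_roots_finite[OF assms(1)] by (intro sum_mono2) auto
  also have "\<dots> \<le> degree g" by (rule sum_order_le_degree[OF assms(1)])
  finally show ?thesis .
qed

text \<open>If e_v = 0, then hasse_on_line p v e a is the univariate polynomial
  y \<mapsto> (\<partial>^e p)(a[v := y]), the Hasse derivative restricted to the line through a in direction v.\<close>

definition hasse_on_line ::
    "('k, 'b::comm_semiring_1) mpoly \<Rightarrow> 'k \<Rightarrow> ('k \<Rightarrow>\<^sub>0 nat) \<Rightarrow> ('k \<Rightarrow> 'b) \<Rightarrow> 'b poly" where
  "hasse_on_line p v e a = (\<Sum>\<alpha>\<in>keys p.
      monom (of_nat (mbinom (drop_var v \<alpha>) e) * lookup p \<alpha> * monomial_value (drop_var v \<alpha> - e) a)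
        (lookup \<alpha> v))"

lemma mbinom_add_single:
  fixes \<alpha> e :: "'k::finite \<Rightarrow>\<^sub>0 nat"
  assumes "lookup e v = 0"
  shows "mbinom \<alpha> (e + single v r) = mbinom (drop_var v \<alpha>) e * (lookup \<alpha> v choose r)"
proof -
  have "mbinom \<alpha> (e + single v r) = (lookup \<alpha> v choose r) *
      (\<Prod>j\<in>UNIV - {v}. lookup \<alpha> j choose lookup (e + single v r) j)"
    unfolding mbinom_eq_prod_UNIV by (subst prod.remove[of _ v]) (simp_all add: lookup_add assms)
  also have "(\<Prod>j\<in>UNIV - {v}. lookup \<alpha> j choose lookup (e + single v r) j)
      = (\<Prod>j\<in>UNIV - {v}. lookup (drop_var v \<alpha>) j choose lookup e j)"
    by (rule prod.cong) (auto simp: lookup_add lookup_single lookup_update when_def)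
  also have "\<dots> = mbinom (drop_var v \<alpha>) e"
    unfolding mbinom_eq_prod_UNIV
    by (subst (2) prod.remove[of _ v]) (simp_all add: lookup_update assms)
  finally show ?thesis by simp
qed

lemma monomial_value_diff_add_single:
  fixes \<alpha> e :: "'k::finite \<Rightarrow>\<^sub>0 nat"
  assumes "lookup e v = 0"
  shows "monomial_value (\<alpha> - (e + single v r)) (a(v := b))
    = monomial_value (drop_var v \<alpha> - e) a * b ^ (lookup \<alpha> v - r)"
proof -
  have "monomial_value (\<alpha> - (e + single v r)) (a(v := b)) = b ^ (lookup \<alpha> v - r) *
      (\<Prod>j\<in>UNIV - {v}. (a(v := b)) j ^ lookup (\<alpha> - (e + single v r)) j)"
    unfolding monomial_value_eq_prod_UNIV
    by (subst prod.remove[of _ v]) (simp_all add: lookup_add lookup_minus assms)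
  also have "(\<Prod>j\<in>UNIV - {v}. (a(v := b)) j ^ lookup (\<alpha> - (e + single v r)) j)
      = (\<Prod>j\<in>UNIV - {v}. a j ^ lookup (drop_var v \<alpha> - e) j)"
    by (rule prod.cong) (auto simp: lookup_add lookup_minus lookup_single lookup_update when_def)
  also have "\<dots> = monomial_value (drop_var v \<alpha> - e) a"
    unfolding monomial_value_eq_prod_UNIV
    by (subst (2) prod.remove[of _ v]) (simp_all add: lookup_update lookup_minus assms)
  finally show ?thesis by (simp only: ac_simps)
qed

lemma mpeval_hasse_add_single:
  fixes p :: "('k::finite, 'b::comm_semiring_1) mpoly"
  assumes "lookup e v = 0"
  shows "mpeval (hasse (e + single v r) p) (a(v := b)) = poly_hasse r (hasse_on_line p v e a) b"
  by (simp add: mpeval_hasse hasse_on_line_def poly_hasse_sum poly_hasse_monom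
      mbinom_add_single[OF assms] monomial_value_diff_add_single[OF assms] mult_ac)

lemma coeff_hasse_on_line:
  "coeff (hasse_on_line p v e a) t = mpeval (hasse e (var_coeff p v t)) a"
  unfolding hasse_on_line_def var_coeff_def coeff_sum coeff_monom hasse_sum mpeval_sum
  by (simp add: sum.inter_filter hasse_single mpeval_single)

lemma degree_hasse_on_line_le:
  assumes "\<And>\<alpha>. \<alpha> \<in> keys p \<Longrightarrow> lookup \<alpha> v \<le> t"
  shows "degree (hasse_on_line p v e a) \<le> t"
  unfolding hasse_on_line_def
  by (intro degree_sum_le order.trans[OF degree_monom_le] assms) simp_all

lemma sum_vanishing_order_on_line_le:
  fixes p :: "('k::finite, 'b::field) mpoly"
  assumes c: "var_coeff p v t \<noteq> 0" and top: "\<And>\<alpha>. \<alpha> \<in> keys p \<Longrightarrow> lookup \<alpha> v \<le> t"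
    and "finite S"
  shows "(\<Sum>b\<in>S. vanishing_order p (a(v := b))) \<le> card S * vanishing_order (var_coeff p v t) a + t"
proof -
  obtain e where e: "mdeg e = vanishing_order (var_coeff p v t) a"
    "mpeval (hasse e (var_coeff p v t)) a \<noteq> 0"
    using vanishing_order_attained[OF c] by blast
  have ev: "lookup e v = 0"
    using e(2) by (cases "lookup e v = 0") (simp_all add: hasse_var_coeff_eq_zero)
  define g where "g = hasse_on_line p v e a"
  have "coeff g t \<noteq> 0" using e(2) by (simp add: g_def coeff_hasse_on_line)
  then have g: "g \<noteq> 0" by auto
  have "vanishing_order p (a(v := b)) \<le> vanishing_order (var_coeff p v t) a + order b g" for b
  proof -
    have "mpeval (hasse (e + single v (order b g)) p) (a(v := b)) \<noteq> 0"
      using poly_hasse_order_ne_zero[OF g] by (simp add: mpeval_hasse_add_single[OF ev] g_def)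
    then show ?thesis using vanishing_order_le e(1) by (fastforce simp: mdeg_add mdeg_single)
  qed
  then have "(\<Sum>b\<in>S. vanishing_order p (a(v := b)))
      \<le> (\<Sum>b\<in>S. vanishing_order (var_coeff p v t) a + order b g)"
    by (rule sum_mono)
  also have "\<dots> = card S * vanishing_order (var_coeff p v t) a + (\<Sum>b\<in>S. order b g)"
    by (simp add: sum.distrib)
  also have "\<dots> \<le> card S * vanishing_order (var_coeff p v t) a + t"
  proof -
    have "degree g \<le> t" unfolding g_def by (rule degree_hasse_on_line_le) (rule top)
    then show ?thesis using sum_order_le_degree_on[OF g \<open>finite S\<close>] by simp
  qed
  finally show ?thesis .
qed

section \<open>Schwartz--Zippel with multiplicities\<close>

lemma sum_PiE_insert:
  assumes "v \<notin> V"
  shows "(\<Sum>a\<in>PiE (insert v V) (\<lambda>_. S). f a) = (\<Sum>a\<in>PiE V (\<lambda>_. S). \<Sum>b\<in>S. f (a(v := b)))"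
proof -
  have "(\<Sum>a\<in>PiE (insert v V) (\<lambda>_. S). f a) = (\<Sum>(b, a)\<in>S \<times> PiE V (\<lambda>_. S). f (a(v := b)))"
    unfolding PiE_insert_eq
    by (subst sum.reindex[OF inj_combinator[OF assms]]) (simp add: case_prod_unfold)
  also have "\<dots> = (\<Sum>a\<in>PiE V (\<lambda>_. S). \<Sum>b\<in>S. f (a(v := b)))"
    unfolding sum.cartesian_product[symmetric] by (rule sum.swap)
  finally show ?thesis .
qed

lemma exists_max_var_exponent:
  fixes p :: "('k, 'b::zero) mpoly"
  assumes "p \<noteq> 0" obtains \<alpha> where "\<alpha> \<in> keys p" "\<And>\<beta>. \<beta> \<in> keys p \<Longrightarrow> lookup \<beta> v \<le> lookup \<alpha> v"
proof -
  let ?E = "(\<lambda>\<alpha>. lookup \<alpha> v) ` keys p"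
  have "finite ?E" "?E \<noteq> {}" using assms by simp_all
  then have "Max ?E \<in> ?E" by (rule Max_in)
  then obtain \<alpha> where \<alpha>: "\<alpha> \<in> keys p" "Max ?E = lookup \<alpha> v" by blast
  show ?thesis
  proof (rule that[OF \<alpha>(1)])
    fix \<beta> assume "\<beta> \<in> keys p"
    then show "lookup \<beta> v \<le> lookup \<alpha> v"
      unfolding \<alpha>(2)[symmetric] by (intro Max_ge[OF \<open>finite ?E\<close>] imageI)
  qed
qed

lemma sum_vanishing_order_le:
  fixes p :: "('k::finite, 'b::field) mpoly"
  assumes "finite S" "finite V" "p \<noteq> 0" "\<And>\<alpha>. \<alpha> \<in> keys p \<Longrightarrow> keys \<alpha> \<subseteq> V"
  shows "card S * (\<Sum>a\<in>PiE V (\<lambda>_. S). vanishing_order p a) \<le> tdeg p * card S ^ card V"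
  using assms(2-)
proof (induction V arbitrary: p rule: finite_induct)
  case empty
  have "mdeg \<alpha> \<le> 0" if "\<alpha> \<in> keys p" for \<alpha> using empty.prems(2)[OF that] by simp
  then have "tdeg p = 0" using tdeg_leI[of p 0] by simp
  with vanishing_order_le_tdeg[OF empty.prems(1)] show ?case by simp
next
  case (insert v V)
  obtain \<alpha> where \<alpha>: "\<alpha> \<in> keys p" "\<And>\<beta>. \<beta> \<in> keys p \<Longrightarrow> lookup \<beta> v \<le> lookup \<alpha> v"
    using exists_max_var_exponent[OF insert.prems(1)] by blast
  define t where "t = lookup \<alpha> v"
  define c where "c = var_coeff p v t"
  have c: "c \<noteq> 0" using var_coeff_ne_zero[OF \<alpha>(1)] by (simp add: c_def t_def)
  let ?X = "\<Sum>a\<in>PiE V (\<lambda>_. S). vanishing_order c a"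
  have IH: "card S * ?X \<le> tdeg c * card S ^ card V"
    using keys_var_coeff_subset[OF insert.prems(2)] by (intro insert.IH[OF c]) (simp add: c_def)
  have "(\<Sum>a\<in>PiE (insert v V) (\<lambda>_. S). vanishing_order p a)
      \<le> (\<Sum>a\<in>PiE V (\<lambda>_. S). card S * vanishing_order c a + t)"
    unfolding sum_PiE_insert[OF insert.hyps(2)] c_def
    using \<alpha>(2) c[unfolded c_def] \<open>finite S\<close>
    by (intro sum_mono sum_vanishing_order_on_line_le) (auto simp: t_def)
  also have "\<dots> = card S * ?X + card S ^ card V * t"
    using insert.hyps(1) by (simp add: sum.distrib sum_distrib_left card_PiE)
  finally have "card S * (\<Sum>a\<in>PiE (insert v V) (\<lambda>_. S). vanishing_order p a)
      \<le> card S * (card S * ?X + card S ^ card V * t)"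
    by (rule mult_le_mono2)
  also have "\<dots> = card S * (card S * ?X) + card S ^ Suc (card V) * t"
    by (simp add: algebra_simps)
  also have "\<dots> \<le> card S * (tdeg c * card S ^ card V) + card S ^ Suc (card V) * t"
    using IH by simp
  also have "\<dots> = (tdeg c + t) * card S ^ Suc (card V)"
    by (simp add: algebra_simps)
  also have "\<dots> \<le> tdeg p * card S ^ Suc (card V)"
    using tdeg_var_coeff[OF c[unfolded c_def]] by (simp add: c_def)
  finally show ?case using insert.hyps by simp
qed

lemma card_vanishing_points_le:
  fixes p :: "('k::finite, 'b::field) mpoly" and \<iota> :: "'c \<Rightarrow> 'b"
  assumes p: "p \<noteq> 0" and S: "finite S" "inj_on \<iota> S" and A: "A \<subseteq> {a. \<forall>j. a j \<in> S}"
    and r: "\<And>a. a \<in> A \<Longrightarrow> r \<le> vanishing_order p (\<lambda>j. \<iota> (a j))"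
  shows "r * card A \<le> tdeg p * card S ^ (CARD('k) - 1)"
proof (cases "S = {}")
  case True
  with A show ?thesis by auto
next
  case False
  let ?S' = "\<iota> ` S" and ?\<iota> = "\<lambda>a j. \<iota> (a j)"
  have inj: "inj_on ?\<iota> A"
  proof (rule inj_onI)
    fix a b assume ab: "a \<in> A" "b \<in> A" and eq: "?\<iota> a = ?\<iota> b"
    show "a = b"
    proof
      fix j show "a j = b j" using inj_onD[OF S(2) fun_cong[OF eq, of j]] ab A by blast
    qed
  qed
  have "r * card A = (\<Sum>a\<in>A. r)" by simp
  also have "\<dots> \<le> (\<Sum>a\<in>A. vanishing_order p (?\<iota> a))" by (rule sum_mono) (rule r)
  also have "\<dots> = (\<Sum>b\<in>?\<iota> ` A. vanishing_order p b)" by (simp add: sum.reindex[OF inj])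
  also have "\<dots> \<le> (\<Sum>b\<in>PiE UNIV (\<lambda>_. ?S'). vanishing_order p b)"
    using A S(1) by (intro sum_mono2) (auto simp: finite_PiE)
  finally have "card S * (r * card A) \<le> card ?S' * (\<Sum>b\<in>PiE UNIV (\<lambda>_. ?S'). vanishing_order p b)"
    using card_image[OF S(2)] by simp
  also have "\<dots> \<le> tdeg p * card ?S' ^ card (UNIV :: 'k set)"
    using S(1) p by (intro sum_vanishing_order_le) auto
  also have "\<dots> = card S * (tdeg p * card S ^ (CARD('k) - 1))"
    using card_image[OF S(2)] finite_UNIV_card_ge_0[where 'a = 'k]
    by (simp add: power_eq_if mult_ac)
  finally show ?thesis using False S(1) by (simp add: card_gt_0_iff)
qed

lemma exists_tdeg_sum_le:
  fixes p :: "'i \<Rightarrow> ('k, 'b::comm_monoid_add) mpoly"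
  assumes "(\<Sum>i\<in>I. p i) \<noteq> 0" obtains i where "i \<in> I" "tdeg (\<Sum>i\<in>I. p i) \<le> tdeg (p i)"
proof -
  obtain \<gamma> where "\<gamma> \<in> keys (\<Sum>i\<in>I. p i)" "mdeg \<gamma> = tdeg (\<Sum>i\<in>I. p i)"
    using tdeg_attained[OF assms] by blast
  moreover from subsetD[OF keys_sum this(1)] obtain i where "i \<in> I" "\<gamma> \<in> keys (p i)" by blast
  ultimately show ?thesis using that mdeg_le_tdeg by metis
qed

theorem lemma4p3:
  fixes S :: "'a::field set"
    and s m d T :: nat
    and D :: real
    and P :: "('k::{finite,linorder} \<Rightarrow> 'a) \<Rightarrow> nat \<Rightarrow> ('k, 'a) mpoly"
    and Q :: "nat \<Rightarrow> ('k, ('k, 'a) ratfun) mpoly"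
    and f :: "('k, 'a) mpoly"
  assumes char: "CHAR('a) = 0 \<or> CHAR('a) > d"
    and finS: "finite S"
    and m_le: "m + 1 + CARD('k) \<le> s"
    and D_def: "D = 10 * real (card S) * (real s - real m) / (real m powr (1 / real CARD('k)))"
    and P_hom: "\<forall>a. (\<forall>j. a j \<in> S) \<longrightarrow> (\<forall>i<s. \<forall>e\<in>Poly_Mapping.keys (P a i). mdeg e = i)"
    and Q_nz: "\<exists>i\<in>{1..m}. Q i \<noteq> 0"
    and Q_deg: "\<forall>i\<in>{1..m}. real (tdeg (Q i)) \<le> D"
    and Q_van: "\<forall>a. (\<forall>j. a j \<in> S) \<longrightarrow> (\<forall>e. mdeg e + m + 1 \<le> s \<longrightarrow> DeltaQ m Q (P a) e a = 0)"
    and f_deg: "tdeg f \<le> d"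
    and agree: "card {a. (\<forall>j. a j \<in> S) \<and> (\<forall>i<s. P a i = DeltaAt f i a)} \<ge> T"
    and T_gt: "real T > (D + real d) * real (card S) ^ (CARD('k) - 1) / (real s - real m)"
  shows "(\<Sum>i\<in>{1..m}. Q i * DeltaPoly f (i - 1)) = 0"
proof (rule ccontr)
  let ?R = "\<Sum>i\<in>{1..m}. Q i * DeltaPoly f (i - 1)"
  let ?A = "{a. (\<forall>j. a j \<in> S) \<and> (\<forall>i<s. P a i = DeltaAt f i a)}"
  assume R: "?R \<noteq> 0"
  have "s - m \<le> vanishing_order ?R (\<lambda>j. rconst (a j))" if "a \<in> ?A" for a
  proof (rule vanishing_order_geI[OF R])
    fix e :: "'k \<Rightarrow>\<^sub>0 nat" assume "mdeg e < s - m"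
    then have e: "mdeg e + m + 1 \<le> s" by simp
    have "mpeval (hasse e ?R) (\<lambda>j. rconst (a j)) = DeltaQ m Q (P a) e a"
      using that e by (intro mpeval_hasse_eq_DeltaQ) auto
    also have "\<dots> = 0" using that e Q_van by blast
    finally show "mpeval (hasse e ?R) (\<lambda>j. rconst (a j)) = 0" .
  qed
  then have count: "(s - m) * card ?A \<le> tdeg ?R * card S ^ (CARD('k) - 1)"
    using inj_rconst by (intro card_vanishing_points_le[OF R finS]) (auto intro: inj_on_subset)
  obtain i where i: "i \<in> {1..m}" "tdeg ?R \<le> tdeg (Q i * DeltaPoly f (i - 1))"
    using exists_tdeg_sum_le[OF R] by blast
  then have "tdeg ?R \<le> tdeg (Q i) + d"
    using tdeg_mult_le tdeg_DeltaPoly_le f_deg by (meson add_left_mono order.trans)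
  then have deg: "real (tdeg ?R) \<le> D + real d" using Q_deg i(1) by fastforce
  have "real (s - m) * real T \<le> real (tdeg ?R) * real (card S) ^ (CARD('k) - 1)"
    using order.trans[OF mult_le_mono2[OF agree] count] by (simp flip: of_nat_mult of_nat_power)
  also have "\<dots> \<le> (D + real d) * real (card S) ^ (CARD('k) - 1)"
    using deg by (intro mult_right_mono) auto
  also have "\<dots> < real T * (real s - real m)"
    using T_gt m_le by (simp add: pos_divide_less_eq)
  finally show False using m_le by (simp add: of_nat_diff mult.commute)
qed

end
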